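(* Let $G=(V,E)$ be a non-bipartite graph with $n=|V|\ge 5$ vertices, and let $K,K'$ be $k$-cliques of $G$ where $n-k-1=\binom{k}{2}$. Let $H$ be the bipartite graph with vertex set $V\cup E$ (bipartition $\{V,E\}$) and edge set $\{\{v,e\} : v\in V,\ e\in E,\ v\notin e\}$. Let $p=n-k-1$. Let $S$ be obtained from $(V\setminus K)\cup E(K)$ by removing an arbitrary vertex of $V\setminus K$, and let $S'$ be obtained from $(V\setminus K')\cup E(K')$ by removing an arbitrary vertex of $V\setminus K'$ (so $S,S'$ are $(p,p)$-bicliques of $H$). If there is a TJ-sequence of $(p,p)$-bicliques from $S$ to $S'$ in $H$, then there is a TJ-sequence of $k$-cliques from $K$ to $K'$ in $G$.
   Context: For $U\subseteq V$, $E(U)$ denotes the set of edges of $G$ with both endpoints in $U$. A $k$-clique is a set of $k$ pairwise adjacent vertices. A TJ-sequence of $k$-cliques is a sequence $K_0,\dots,K_\ell$ of $k$-cliques with $|K_i\setminus K_{i+1}|=|K_{i+1}\setminus K_i|=1$ for all $i$. A vertex set $S$ is a $(p,q)$-biclique of $H$ if $H[S]$ is isomorphic to $K_{p,q}$; a TJ-sequence of $(p,p)$-bicliques is a sequence $S_0,\dots,S_\ell$ of $(p,p)$-bicliques with $|S_i\setminus S_{i+1}|=|S_{i+1}\setminus S_i|=1$ for all $i$. *)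

theory Defs
  imports Main
begin

definition simple_graph :: "'a set \<Rightarrow> 'a set set \<Rightarrow> bool" where
  "simple_graph V E \<longleftrightarrow> finite V \<and> (\<forall>e\<in>E. e \<subseteq> V \<and> card e = 2)"

definition bipartite :: "'a set \<Rightarrow> 'a set set \<Rightarrow> bool" where
  "bipartite V E \<longleftrightarrow> (\<exists>A. A \<subseteq> V \<and> (\<forall>e\<in>E. card (e \<inter> A) = 1))"

definition is_clique :: "'a set \<Rightarrow> 'a set set \<Rightarrow> nat \<Rightarrow> 'a set \<Rightarrow> bool" where
  "is_clique V E k K \<longleftrightarrow> K \<subseteq> V \<and> card K = k \<and>
     (\<forall>u\<in>K. \<forall>v\<in>K. u \<noteq> v \<longrightarrow> {u, v} \<in> E)"

definition edges_in :: "'a set set \<Rightarrow> 'a set \<Rightarrow> 'a set set" where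
  "edges_in E U = {e \<in> E. e \<subseteq> U}"

definition is_biclique :: "'b set \<Rightarrow> ('b \<Rightarrow> 'b \<Rightarrow> bool) \<Rightarrow> nat \<Rightarrow> nat \<Rightarrow> 'b set \<Rightarrow> bool" where
  "is_biclique W adj p q S \<longleftrightarrow> S \<subseteq> W \<and>
     (\<exists>A B. A \<inter> B = {} \<and> A \<union> B = S \<and> finite A \<and> finite B \<and> card A = p \<and> card B = q \<and>
        (\<forall>x\<in>S. \<forall>y\<in>S. adj x y \<longleftrightarrow> ((x \<in> A \<and> y \<in> B) \<or> (x \<in> B \<and> y \<in> A))))"

definition tj_step :: "'b set \<Rightarrow> 'b set \<Rightarrow> bool" where
  "tj_step X Y \<longleftrightarrow> card (X - Y) = 1 \<and> card (Y - X) = 1"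

definition tj_reachable :: "('b set \<Rightarrow> bool) \<Rightarrow> 'b set \<Rightarrow> 'b set \<Rightarrow> bool" where
  "tj_reachable P X Y \<longleftrightarrow> (\<exists>xs. xs \<noteq> [] \<and> hd xs = X \<and> last xs = Y \<and>
     (\<forall>Z\<in>set xs. P Z) \<and> (\<forall>i. Suc i < length xs \<longrightarrow> tj_step (xs ! i) (xs ! Suc i)))"

definition H_vertices :: "'a set \<Rightarrow> 'a set set \<Rightarrow> ('a + 'a set) set" where
  "H_vertices V E = Inl ` V \<union> Inr ` E"

definition H_adj :: "'a set \<Rightarrow> 'a set set \<Rightarrow> ('a + 'a set) \<Rightarrow> ('a + 'a set) \<Rightarrow> bool" where
  "H_adj V E x y \<longleftrightarrow>
     (\<exists>v e. v \<in> V \<and> e \<in> E \<and> v \<notin> e \<and> ((x = Inl v \<and> y = Inr e) \<or> (x = Inr e \<and> y = Inl v)))"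

end

(* A (p,p)-biclique S of H with p \<ge> 1 consists of a set X of p vertices together with
   p edges of G avoiding X, so all its edges lie in E(V - X), where |V - X| = k + 1.
   Along the TJ-sequence of bicliques we carry a k-clique inside V - X that is
   TJ-reachable from K.  When a step exchanges a vertex b of X for a new vertex a, the
   p edges are kept and therefore avoid the k vertices V - X - {a}; since p = k choose 2,
   they are all pairs of these vertices, so V - X - {a} is a k-clique lying in both the
   old and the new set V - X.  Two k-subsets of a (k+1)-set are equal or one TJ-step
   apart, which extends the clique sequence. *)

theory Submission
  imports Defs
begin

lemma tj_reachable_refl: "P X \<Longrightarrow> tj_reachable P X X"
  unfolding tj_reachable_def by (intro exI[of _ "[X]"]) auto

lemma tj_reachable_target: "tj_reachable P X Y \<Longrightarrow> P Y"
  unfolding tj_reachable_def by auto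

lemma tj_reachable_snoc:
  assumes "tj_reachable P X Y" "P Z" "tj_step Y Z"
  shows "tj_reachable P X Z"
proof -
  obtain xs where xs: "xs \<noteq> []" "hd xs = X" "last xs = Y" "\<forall>Z\<in>set xs. P Z"
    "\<forall>i. Suc i < length xs \<longrightarrow> tj_step (xs ! i) (xs ! Suc i)"
    using assms(1) unfolding tj_reachable_def by blast
  have "tj_step ((xs @ [Z]) ! i) ((xs @ [Z]) ! Suc i)" if "Suc i < length (xs @ [Z])" for i
  proof (cases "Suc i < length xs")
    case True
    then show ?thesis using xs(5) by (simp add: nth_append)
  next
    case False
    with that have "i = length xs - 1" by simp
    then show ?thesis using xs(1,3) assms(3) by (simp add: nth_append last_conv_nth)
  qed
  then show ?thesis
    unfolding tj_reachable_def using xs assms(2) by (intro exI[of _ "xs @ [Z]"]) auto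
qed

lemma tj_reachable_invariant:
  assumes "tj_reachable P X Y" "Q X"
    and "\<And>S T. P S \<Longrightarrow> P T \<Longrightarrow> tj_step S T \<Longrightarrow> Q S \<Longrightarrow> Q T"
  shows "Q Y"
proof -
  obtain xs where xs: "xs \<noteq> []" "hd xs = X" "last xs = Y" "\<forall>Z\<in>set xs. P Z"
    "\<forall>i. Suc i < length xs \<longrightarrow> tj_step (xs ! i) (xs ! Suc i)"
    using assms(1) unfolding tj_reachable_def by blast
  have "Q (xs ! i)" if "i < length xs" for i
    using that
  proof (induction i)
    case 0
    then show ?case using xs(1,2) assms(2) by (simp add: hd_conv_nth)
  next
    case (Suc i)
    have "P (xs ! i)" "P (xs ! Suc i)" using Suc.prems xs(4) by simp_all
    with Suc show ?case using assms(3) xs(5) by simp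
  qed
  then show ?thesis using xs(1,3) by (metis last_conv_nth diff_less length_greater_0_conv zero_less_one)
qed

lemma eq_or_tj_step_if_card_Suc:
  assumes "finite W" "card W = Suc k" "C \<subseteq> W" "D \<subseteq> W" "card C = k" "card D = k"
  shows "C = D \<or> tj_step C D"
proof -
  have "card (W - C) = 1" "card (W - D) = 1"
    using assms by (simp_all add: card_Diff_subset finite_subset)
  then obtain c d where "W - C = {c}" "W - D = {d}" by (auto simp: card_1_singleton_iff)
  then have C: "C = W - {c}" and D: "D = W - {d}" using assms(3,4) by auto
  show ?thesis
  proof (cases "c = d")
    case False
    then have "C - D = {d}" "D - C = {c}" using C D \<open>W - C = {c}\<close> \<open>W - D = {d}\<close> by auto
    then show ?thesis unfolding tj_step_def by simp
  qed (simp add: C D)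
qed

lemma tj_reachable_within_card_Suc:
  assumes "tj_reachable P X C" "P D" "finite W" "card W = Suc k"
    and "C \<subseteq> W" "D \<subseteq> W" "card C = k" "card D = k"
  shows "tj_reachable P X D"
  using eq_or_tj_step_if_card_Suc[OF assms(3-8)] tj_reachable_snoc[OF assms(1,2)] assms(1) by blast

lemma pair_mem_if_card_eq_binomial:
  assumes "finite C" "F \<subseteq> {e. e \<subseteq> C \<and> card e = 2}" "card F = card C choose 2"
    and "u \<in> C" "v \<in> C" "u \<noteq> v"
  shows "{u, v} \<in> F"
proof -
  have "F = {e. e \<subseteq> C \<and> card e = 2}"
    using card_subset_eq[OF _ assms(2)] assms(1,3) by (simp add: n_subsets)
  then show ?thesis using assms(4-6) by auto
qed

lemma H_adj_sym: "H_adj V E x y \<longleftrightarrow> H_adj V E y x"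
  unfolding H_adj_def by blast

lemma H_adj_Inl_Inr: "H_adj V E (Inl v) (Inr e) \<longleftrightarrow> v \<in> V \<and> e \<in> E \<and> v \<notin> e"
  unfolding H_adj_def by blast

lemma H_adj_sides: "H_adj V E x y \<Longrightarrow> x \<in> range Inl \<longleftrightarrow> y \<in> range Inr"
  unfolding H_adj_def by auto

lemma biclique_H_subset:
  assumes "is_biclique (H_vertices V E) (H_adj V E) p q S"
  shows "Inl -` S \<subseteq> V" "Inr -` S \<subseteq> E"
  using assms unfolding is_biclique_def H_vertices_def by auto

lemma biclique_H_sides:
  assumes "is_biclique (H_vertices V E) (H_adj V E) p p S" "p \<ge> 1"
  obtains L R where "S = L \<union> R" "L \<subseteq> range Inl" "R \<subseteq> range Inr" "card L = p" "card R = p"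
    "\<And>x y. x \<in> L \<Longrightarrow> y \<in> R \<Longrightarrow> H_adj V E x y"
proof -
  obtain A B where AB: "A \<inter> B = {}" "A \<union> B = S" "card A = p" "card B = p"
    and adj: "\<forall>x\<in>S. \<forall>y\<in>S. H_adj V E x y \<longleftrightarrow> ((x \<in> A \<and> y \<in> B) \<or> (x \<in> B \<and> y \<in> A))"
    using assms(1) unfolding is_biclique_def by blast
  have adj_AB: "H_adj V E x y" if "x \<in> A" "y \<in> B" for x y
    using adj that AB(2) by blast
  obtain a b where ab: "a \<in> A" "b \<in> B"
    using AB(3,4) assms(2) by fastforce
  have A_side: "x \<in> range Inl \<longleftrightarrow> a \<in> range Inl" if "x \<in> A" for x
    using H_adj_sides[OF adj_AB[OF that ab(2)]] H_adj_sides[OF adj_AB[OF ab]] by simp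
  have B_side: "y \<in> range Inr \<longleftrightarrow> a \<in> range Inl" if "y \<in> B" for y
    using H_adj_sides[OF adj_AB[OF ab(1) that]] by simp
  have not_Inl: "z \<notin> range Inl \<longleftrightarrow> z \<in> range Inr" for z :: "'a + 'a set"
    by (cases z) auto
  show ?thesis
  proof (cases "a \<in> range Inl")
    case True
    then show ?thesis using that[of A B] A_side B_side AB adj_AB by (metis Un_commute subsetI)
  next
    case False
    then show ?thesis using that[of B A] A_side B_side not_Inl AB adj_AB H_adj_sym
      by (metis Un_commute subsetI)
  qed
qed

lemma biclique_H_parts:
  assumes "is_biclique (H_vertices V E) (H_adj V E) p p S" "p \<ge> 1"
  shows "card (Inl -` S) = p" "card (Inr -` S) = p"
    and "\<And>v e. Inl v \<in> S \<Longrightarrow> Inr e \<in> S \<Longrightarrow> v \<notin> e"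
proof -
  obtain L R where LR: "S = L \<union> R" "L \<subseteq> range Inl" "R \<subseteq> range Inr" "card L = p" "card R = p"
    and adj: "\<And>x y. x \<in> L \<Longrightarrow> y \<in> R \<Longrightarrow> H_adj V E x y"
    using biclique_H_sides[OF assms] by blast
  have "Inl -` S = Inl -` L" "Inr -` S = Inr -` R" using LR(1-3) by auto
  then show "card (Inl -` S) = p" "card (Inr -` S) = p"
    using LR(2-5) by (simp_all add: card_vimage_inj)
  show "v \<notin> e" if "Inl v \<in> S" "Inr e \<in> S" for v e
  proof -
    have "Inl v \<in> L" "Inr e \<in> R" using that LR(1-3) by auto
    from adj[OF this] show ?thesis by (simp add: H_adj_Inl_Inr)
  qed
qed

lemma tj_step_exchanges_Inl:
  assumes "tj_step S T" "Inl -` S \<noteq> Inl -` T"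
    and "finite (Inl -` S)" "finite (Inl -` T)" "card (Inl -` S) = card (Inl -` T)"
  obtains a b where "S - T = {Inl b}" "T - S = {Inl a}"
proof -
  have "\<not> Inl -` T \<subseteq> Inl -` S" "\<not> Inl -` S \<subseteq> Inl -` T"
    using assms(2-5) card_subset_eq by metis+
  then obtain a b where "Inl a \<in> T - S" "Inl b \<in> S - T" by blast
  then have "S - T = {Inl b}" "T - S = {Inl a}"
    using assms(1) unfolding tj_step_def by (metis card_1_singletonE singletonD)+
  then show ?thesis using that by blast
qed

lemma biclique_H_tj_step_clique:
  assumes G: "simple_graph V E" "p = k choose 2" "card V = k + 1 + p" "k \<ge> 2"
    and S: "is_biclique (H_vertices V E) (H_adj V E) p p S"
    and T: "is_biclique (H_vertices V E) (H_adj V E) p p T"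
    and step: "tj_step S T" and moved: "Inl -` S \<noteq> Inl -` T"
  shows "is_clique V E k ((V - Inl -` S) \<inter> (V - Inl -` T))"
proof -
  define X Y F where "X = Inl -` S" and "Y = Inl -` T" and "F = Inr -` S"
  have "p \<ge> 1" using G(4) by (simp add: G(2) Suc_le_eq zero_less_binomial_iff)
  note partsS = biclique_H_parts[OF S this] and partsT = biclique_H_parts[OF T this]
  have fin: "finite V" using G(1) by (simp add: simple_graph_def)
  have XY: "X \<subseteq> V" "Y \<subseteq> V" "card X = p" "card Y = p"
    using biclique_H_subset[OF S] biclique_H_subset[OF T] partsS partsT by (auto simp: X_def Y_def)
  have "finite X" "finite Y" using XY(1,2) fin finite_subset by auto
  then obtain a b where ST: "S - T = {Inl b}" and TS: "T - S = {Inl a}"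
    using tj_step_exchanges_Inl[OF step moved] XY(3,4) unfolding X_def Y_def by metis
  then have a: "a \<in> Y" "a \<notin> X" by (auto simp: X_def Y_def)
  define C where "C = V - insert a X"
  have C_eq: "(V - Inl -` S) \<inter> (V - Inl -` T) = C"
    using TS a by (auto simp: C_def X_def Y_def)
  have "insert a X \<subseteq> V" using XY a by auto
  then have card_C: "card C = k"
    using \<open>finite X\<close> XY(3) G(3) a(2) by (simp add: C_def card_Diff_subset)
  have F_T: "Inr e \<in> T" if "e \<in> F" for e
    using that ST by (auto simp: F_def)
  have F_pairs: "F \<subseteq> {e. e \<subseteq> C \<and> card e = 2}"
  proof
    fix e assume e: "e \<in> F"
    have "e \<in> E" using biclique_H_subset(2)[OF S] e by (auto simp: F_def)
    then have "e \<subseteq> V" "card e = 2" using G(1) by (auto simp: simple_graph_def)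
    moreover have "v \<notin> e" if "v \<in> insert a X" for v
      using that e F_T partsS(3) partsT(3) a(1) by (auto simp: F_def X_def Y_def)
    ultimately show "e \<in> {e. e \<subseteq> C \<and> card e = 2}" by (auto simp: C_def)
  qed
  have "card F = card C choose 2" using partsS(2) card_C by (simp add: F_def G(2))
  then have "{u, v} \<in> F" if "u \<in> C" "v \<in> C" "u \<noteq> v" for u v
    using pair_mem_if_card_eq_binomial[OF _ F_pairs] that fin by (simp add: C_def)
  moreover have "F \<subseteq> E" using biclique_H_subset(2)[OF S] by (simp add: F_def)
  ultimately show ?thesis using card_C by (auto simp: is_clique_def C_eq C_def)
qed

lemma Diff_Inl_vimage_eq_insert:
  assumes "K \<subseteq> V" "u \<in> V - K"
  shows "V - Inl -` ((Inl ` (V - K) \<union> Inr ` F) - {Inl u}) = insert u K"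
  using assms by auto

lemma card_biclique_H_complement:
  assumes "simple_graph V E" "card V = k + 1 + p" "p \<ge> 1"
    and "is_biclique (H_vertices V E) (H_adj V E) p p S"
  shows "card (V - Inl -` S) = Suc k"
proof -
  have "finite V" using assms(1) by (simp add: simple_graph_def)
  then show ?thesis
    using biclique_H_subset(1)[OF assms(4)] biclique_H_parts(1)[OF assms(4,3)] assms(2)
    by (simp add: card_Diff_subset finite_subset)
qed

lemma tj_step_preserves_reachable_clique:
  assumes G: "simple_graph V E" "p = k choose 2" "card V = k + 1 + p" "k \<ge> 2"
    and S: "is_biclique (H_vertices V E) (H_adj V E) p p S"
    and T: "is_biclique (H_vertices V E) (H_adj V E) p p T"
    and step: "tj_step S T"
    and C: "C \<subseteq> V - Inl -` S" "tj_reachable (is_clique V E k) K C"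
  shows "\<exists>D \<subseteq> V - Inl -` T. tj_reachable (is_clique V E k) K D"
proof (cases "Inl -` S = Inl -` T")
  case True
  then show ?thesis using C by auto
next
  case False
  define D where "D = (V - Inl -` S) \<inter> (V - Inl -` T)"
  have D: "is_clique V E k D"
    using biclique_H_tj_step_clique[OF G S T step False] by (simp add: D_def)
  have "p \<ge> 1" using G(4) by (simp add: G(2) Suc_le_eq zero_less_binomial_iff)
  then have "card (V - Inl -` S) = Suc k"
    using card_biclique_H_complement[OF G(1,3) _ S] by simp
  moreover have "finite (V - Inl -` S)" using G(1) by (simp add: simple_graph_def)
  moreover have "card C = k" using tj_reachable_target[OF C(2)] by (simp add: is_clique_def)
  moreover have "D \<subseteq> V - Inl -` S" "card D = k" using D by (auto simp: D_def is_clique_def)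
  ultimately have "tj_reachable (is_clique V E k) K D"
    using tj_reachable_within_card_Suc[OF C(2) D _ _ C(1)] by blast
  moreover have "D \<subseteq> V - Inl -` T" by (simp add: D_def)
  ultimately show ?thesis by blast
qed

lemma reachable_clique_along_biclique_H_path:
  assumes G: "simple_graph V E" "p = k choose 2" "card V = k + 1 + p" "k \<ge> 2"
    and path: "tj_reachable (is_biclique (H_vertices V E) (H_adj V E) p p) S S'"
    and C: "C \<subseteq> V - Inl -` S" "tj_reachable (is_clique V E k) K C"
  shows "\<exists>C' \<subseteq> V - Inl -` S'. tj_reachable (is_clique V E k) K C'"
proof (rule tj_reachable_invariant[OF path])
  show "\<exists>C \<subseteq> V - Inl -` S. tj_reachable (is_clique V E k) K C" using C by blast
next
  fix T T'
  assume T: "is_biclique (H_vertices V E) (H_adj V E) p p T"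
    and T': "is_biclique (H_vertices V E) (H_adj V E) p p T'"
    and step: "tj_step T T'" and "\<exists>C \<subseteq> V - Inl -` T. tj_reachable (is_clique V E k) K C"
  then obtain C where "C \<subseteq> V - Inl -` T" "tj_reachable (is_clique V E k) K C" by blast
  then show "\<exists>C' \<subseteq> V - Inl -` T'. tj_reachable (is_clique V E k) K C'"
    by (rule tj_step_preserves_reachable_clique[OF G T T' step])
qed

theorem lemma4:
  fixes V :: "'a set" and E :: "'a set set" and K K' :: "'a set" and k :: nat and u u' :: 'a
  assumes "simple_graph V E"
    and "\<not> bipartite V E"
    and "card V \<ge> 5"
    and "card V = k + 1 + (k choose 2)"
    and "is_clique V E k K" and "is_clique V E k K'"
    and "u \<in> V - K" and "u' \<in> V - K'"
    and "tj_reachable (is_biclique (H_vertices V E) (H_adj V E) (card V - k - 1) (card V - k - 1))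
           ((Inl ` (V - K) \<union> Inr ` edges_in E K) - {Inl u})
           ((Inl ` (V - K') \<union> Inr ` edges_in E K') - {Inl u'})"
  shows "tj_reachable (is_clique V E k) K K'"
proof -
  have "k \<ge> 2"
  proof (rule ccontr)
    assume "\<not> k \<ge> 2"
    then have "k choose 2 = 0" by (simp add: binomial_eq_0)
    then show False using assms(3,4) \<open>\<not> k \<ge> 2\<close> by linarith
  qed
  have "card V - k - 1 = k choose 2" using assms(4) by simp
  then have path: "tj_reachable (is_biclique (H_vertices V E) (H_adj V E) (k choose 2) (k choose 2))
           ((Inl ` (V - K) \<union> Inr ` edges_in E K) - {Inl u})
           ((Inl ` (V - K') \<union> Inr ` edges_in E K') - {Inl u'})"
    using assms(9) by simp
  have K_V: "K \<subseteq> V" "K' \<subseteq> V" and card_K': "card K' = k"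
    using assms(5,6) by (auto simp: is_clique_def)
  obtain C where C: "C \<subseteq> insert u' K'" "tj_reachable (is_clique V E k) K C"
    using reachable_clique_along_biclique_H_path[OF assms(1) refl assms(4) \<open>k \<ge> 2\<close> path
        _ tj_reachable_refl[of "is_clique V E k", OF assms(5)]]
    unfolding Diff_Inl_vimage_eq_insert[OF K_V(1) assms(7)] Diff_Inl_vimage_eq_insert[OF K_V(2) assms(8)]
    by blast
  have "finite (insert u' K')" "card (insert u' K') = Suc k" "card C = k"
    using assms(1,8) K_V(2) card_K' tj_reachable_target[OF C(2)]
    by (auto simp: simple_graph_def is_clique_def finite_subset)
  then show ?thesis
    using tj_reachable_within_card_Suc[OF C(2) assms(6) _ _ C(1) subset_insertI _ card_K'] by blast
qed

end
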